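(* Let $n$ be a positive integer, $p_1,\dots,p_n$ distinct primes, and $(X,r)$ an indecomposable multipermutation solution of the YBE with $|X|=p_1\cdots p_n$. Then both $(X,r)$ and the solution $(\mathcal G(X,r),r_{\mathcal G})$ associated to the left brace $\mathcal G(X,r)$ have multipermutation level at most $n$.
   Context: A solution of the Yang–Baxter equation (YBE) is a pair $(X,r)$, where $X$ is a non-empty set and $r\colon X\times X\to X\times X$, written $r(x,y)=(\sigma_x(y),\gamma_y(x))$, satisfies: $r^2=\mathrm{id}$; all $\sigma_x,\gamma_y$ are bijections of $X$; and $r_{12}r_{23}r_{12}=r_{23}r_{12}r_{23}$ on $X^3$, where $r_{12}=r\times\mathrm{id}_X$, $r_{23}=\mathrm{id}_X\times r$. $\mathcal G(X,r)=\langle\sigma_x:x\in X\rangle\le\mathrm{Sym}_X$; $(X,r)$ is indecomposable if $\mathcal G(X,r)$ is transitive on $X$. Retract: $x\sim y\iff\sigma_x=\sigma_y$, inducing a solution $\mathrm{Ret}(X,r)$ on $X/{\sim}$; $\mathrm{Ret}^k$ is the $k$-fold iterate; $(X,r)$ is multipermutation if $|\mathrm{Ret}^k(X,r)|=1$ for some $k\ge1$, the least such $k$ being its multipermutation level. A left brace is a set $B$ with operations $+$ and $\circ$ (written $ab$) such that $(B,+)$ is an abelian group, $(B,\circ)$ is a group and $a(b+c)+a=ab+ac$; $\lambda_a(b)=-a+ab$. The solution associated to $B$ is $(B,r_B)$ with $r_B(a,b)=(\lambda_a(b),\lambda^{-1}_{\lambda_a(b)}(a))$. Brace structure on $\mathcal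 G(X,r)$: the structure group $G(X,r)=\langle x\in X\mid xy=\sigma_x(y)\gamma_y(x)\rangle$ is a left brace with additive group free abelian on $X$ and $\lambda_x(y)=\sigma_x(y)$; $x\mapsto\sigma_x$ extends to a group epimorphism $\phi\colon G(X,r)\to\mathcal G(X,r)$ with kernel $\{a: ab=a+b\ \forall b\}$, and $\mathcal G(X,r)$ carries the unique left brace structure making $\phi$ a brace homomorphism. *)

theory Defs
  imports "HOL-Algebra.Algebra" "HOL-Computational_Algebra.Primes"
begin

definition sig :: "('a \<times> 'a \<Rightarrow> 'a \<times> 'a) \<Rightarrow> 'a \<Rightarrow> 'a \<Rightarrow> 'a" where
  "sig r x y = fst (r (x, y))"

definition gam :: "('a \<times> 'a \<Rightarrow> 'a \<times> 'a) \<Rightarrow> 'a \<Rightarrow> 'a \<Rightarrow> 'a" where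
  "gam r y x = snd (r (x, y))"

definition r12 :: "('a \<times> 'a \<Rightarrow> 'a \<times> 'a) \<Rightarrow> 'a \<times> 'a \<times> 'a \<Rightarrow> 'a \<times> 'a \<times> 'a" where
  "r12 r t = (case t of (x, y, z) \<Rightarrow> (fst (r (x, y)), snd (r (x, y)), z))"

definition r23 :: "('a \<times> 'a \<Rightarrow> 'a \<times> 'a) \<Rightarrow> 'a \<times> 'a \<times> 'a \<Rightarrow> 'a \<times> 'a \<times> 'a" where
  "r23 r t = (case t of (x, y, z) \<Rightarrow> (x, fst (r (y, z)), snd (r (y, z))))"

definition solution :: "'a set \<Rightarrow> ('a \<times> 'a \<Rightarrow> 'a \<times> 'a) \<Rightarrow> bool" where
  "solution S r \<longleftrightarrow>
     S \<noteq> {} \<and>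
     (\<forall>x\<in>S. \<forall>y\<in>S. fst (r (x, y)) \<in> S \<and> snd (r (x, y)) \<in> S) \<and>
     (\<forall>x\<in>S. \<forall>y\<in>S. r (r (x, y)) = (x, y)) \<and>
     (\<forall>x\<in>S. bij_betw (sig r x) S S) \<and>
     (\<forall>y\<in>S. bij_betw (gam r y) S S) \<and>
     (\<forall>x\<in>S. \<forall>y\<in>S. \<forall>z\<in>S.
        r12 r (r23 r (r12 r (x, y, z))) = r23 r (r12 r (r23 r (x, y, z))))"

text \<open>The permutation group G(S,r) = <sigma_x : x in S> inside Sym_X
  (permutations represented as extensional bijections of S, HOL-Algebra's BijGroup).\<close>
definition permG :: "'a set \<Rightarrow> ('a \<times> 'a \<Rightarrow> 'a \<times> 'a) \<Rightarrow> ('a \<Rightarrow> 'a) set" where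
  "permG S r = generate (BijGroup S) {restrict (sig r x) S | x. x \<in> S}"

definition indecomposable :: "'a set \<Rightarrow> ('a \<times> 'a \<Rightarrow> 'a \<times> 'a) \<Rightarrow> bool" where
  "indecomposable S r \<longleftrightarrow> (\<forall>x\<in>S. \<forall>y\<in>S. \<exists>g\<in>permG S r. g x = y)"

text \<open>Iterated retraction: Ret^k(S,r) is (canonically isomorphic to) S modulo the
  relation ret_rel S r k, where ret_rel 0 is equality and x ~_{k+1} y iff the
  permutations sigma_[x], sigma_[y] of Ret^k(S,r) = S/~_k coincide, i.e.
  sigma_x(z) ~_k sigma_y(z) for all z.\<close>
fun ret_rel :: "'a set \<Rightarrow> ('a \<times> 'a \<Rightarrow> 'a \<times> 'a) \<Rightarrow> nat \<Rightarrow> ('a \<times> 'a) set" where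
  "ret_rel S r 0 = {(x, y). x \<in> S \<and> y \<in> S \<and> x = y}"
| "ret_rel S r (Suc k) = {(x, y). x \<in> S \<and> y \<in> S \<and>
      (\<forall>z\<in>S. (sig r x z, sig r y z) \<in> ret_rel S r k)}"

definition multipermutation :: "'a set \<Rightarrow> ('a \<times> 'a \<Rightarrow> 'a \<times> 'a) \<Rightarrow> bool" where
  "multipermutation S r \<longleftrightarrow> (\<exists>k\<ge>1. card (S // ret_rel S r k) = 1)"

definition mp_level :: "'a set \<Rightarrow> ('a \<times> 'a \<Rightarrow> 'a \<times> 'a) \<Rightarrow> nat" where
  "mp_level S r = (LEAST k. k \<ge> 1 \<and> card (S // ret_rel S r k) = 1)"

definition addG :: "'b set \<Rightarrow> ('b \<Rightarrow> 'b \<Rightarrow> 'b) \<Rightarrow> 'b monoid" where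
  "addG B pl = \<lparr>carrier = B, monoid.mult = pl, one = (THE z. z \<in> B \<and> (\<forall>b\<in>B. pl z b = b))\<rparr>"

definition mulG :: "'b set \<Rightarrow> ('b \<Rightarrow> 'b \<Rightarrow> 'b) \<Rightarrow> 'b monoid" where
  "mulG B mul = \<lparr>carrier = B, monoid.mult = mul, one = (THE e. e \<in> B \<and> (\<forall>b\<in>B. mul e b = b))\<rparr>"

definition left_brace :: "'b set \<Rightarrow> ('b \<Rightarrow> 'b \<Rightarrow> 'b) \<Rightarrow> ('b \<Rightarrow> 'b \<Rightarrow> 'b) \<Rightarrow> bool" where
  "left_brace B pl mul \<longleftrightarrow>
     comm_group (addG B pl) \<and> group (mulG B mul) \<and>
     (\<forall>a\<in>B. \<forall>b\<in>B. \<forall>c\<in>B. pl (mul a (pl b c)) a = pl (mul a b) (mul a c))"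

definition blam :: "'b set \<Rightarrow> ('b \<Rightarrow> 'b \<Rightarrow> 'b) \<Rightarrow> ('b \<Rightarrow> 'b \<Rightarrow> 'b) \<Rightarrow> 'b \<Rightarrow> 'b \<Rightarrow> 'b" where
  "blam B pl mul a b = pl (inv\<^bsub>addG B pl\<^esub> a) (mul a b)"

definition brace_sol :: "'b set \<Rightarrow> ('b \<Rightarrow> 'b \<Rightarrow> 'b) \<Rightarrow> ('b \<Rightarrow> 'b \<Rightarrow> 'b) \<Rightarrow> 'b \<times> 'b \<Rightarrow> 'b \<times> 'b" where
  "brace_sol B pl mul p = (case p of (a, b) \<Rightarrow>
     (blam B pl mul a b,
      the_inv_into B (blam B pl mul (blam B pl mul a b)) a))"

text \<open>Brace structures on G(S,r) (multiplication = composition of permutations)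
  that make phi : G(S,r) -> G(S,r), x |-> sigma_x, a brace homomorphism.
  Since phi(lambda_a(y)) = sigma_{phi(a)(y)} in the structure group brace and the
  sigma_y generate, this amounts to lambda_g(sigma_y) = sigma_{g(y)}; this
  determines the addition uniquely.\<close>
definition induced_brace_add :: "'a set \<Rightarrow> ('a \<times> 'a \<Rightarrow> 'a \<times> 'a) \<Rightarrow> (('a \<Rightarrow> 'a) \<Rightarrow> ('a \<Rightarrow> 'a) \<Rightarrow> ('a \<Rightarrow> 'a)) \<Rightarrow> bool" where
  "induced_brace_add S r pl \<longleftrightarrow>
     left_brace (permG S r) pl (monoid.mult (BijGroup S)) \<and>
     (\<forall>g\<in>permG S r. \<forall>y\<in>S.
        blam (permG S r) pl (monoid.mult (BijGroup S)) g (restrict (sig r y) S)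
          = restrict (sig r (g y)) S)"

end

theory Submission
  imports Defs
begin

text \<open>
  Write \<open>x \<sim>\<^sub>k y\<close> for \<open>(x, y) \<in> ret_rel S r k\<close>. The braid relation yields
  \<open>\<sigma>\<^sub>a \<circ> \<sigma>\<^bsub>\<sigma>\<^sub>a\<^sup>-\<^sup>1(b)\<^esub> = \<sigma>\<^sub>b \<circ> \<sigma>\<^bsub>\<sigma>\<^sub>b\<^sup>-\<^sup>1(a)\<^esub>\<close>, from which an induction on
  \<open>k\<close> shows that every \<open>\<sigma>\<^sub>w\<close>, hence all of \<open>\<G>(X, r)\<close>, preserves \<open>\<sim>\<^sub>k\<close>.
  As \<open>\<G>(X, r)\<close> is transitive, all classes of \<open>\<sim>\<^sub>k\<close> have the same size, so the numbers
  \<open>c\<^sub>k = |X/\<sim>\<^sub>k|\<close> form a divisor chain of \<open>|X| = p\<^sub>1 \<cdots> p\<^sub>n\<close>. A repetition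
  \<open>c\<^bsub>k+1\<^esub> = c\<^sub>k\<close> forces \<open>\<sim>\<^bsub>k+1\<^esub> = \<sim>\<^sub>k\<close>, i.e. the retractions stabilise,
  which for a multipermutation solution happens only once \<open>c\<^sub>k = 1\<close>. As \<open>|X|\<close> is
  squarefree, every strict step loses a prime factor, so \<open>c\<^sub>n = 1\<close>.

  For the brace \<open>\<G>(X, r)\<close>, call \<open>g, h\<close> pointwise \<open>k\<close>-related if \<open>g(y) \<sim>\<^sub>k h(y)\<close> for
  all \<open>y\<close>. Writing \<open>c\<close> as a product of generators and using \<open>c \<sigma>\<^sub>v = c + \<sigma>\<^bsub>c(v)\<^esub>\<close>
  and \<open>\<lambda>\<^sub>g(\<sigma>\<^sub>y) = \<sigma>\<^bsub>g(y)\<^esub>\<close>, one sees that \<open>\<lambda>\<^sub>g(c)\<close> and \<open>\<lambda>\<^sub>h(c)\<close> are pointwise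
  \<open>k\<close>-related whenever \<open>g, h\<close> are pointwise \<open>(k+1)\<close>-related. Hence the \<open>k\<close>-th retraction
  relation of the brace solution contains the pointwise lift of \<open>\<sim>\<^sub>k\<close>, which relates
  everything for \<open>k = n\<close>.
\<close>

section \<open>Equivalence classes and divisor chains\<close>

lemma inverse_preserves_finite_relation:
  assumes "finite R" "R \<subseteq> S \<times> S" "inj_on f S"
    and f_pres: "\<And>x y. (x, y) \<in> R \<Longrightarrow> (f x, f y) \<in> R"
    and g: "\<And>x. x \<in> S \<Longrightarrow> g x \<in> S \<and> f (g x) = x"
    and "(x, y) \<in> R"
  shows "(g x, g y) \<in> R"
proof -
  have "inj_on (map_prod f f) R"
    using map_prod_inj_on[OF \<open>inj_on f S\<close> \<open>inj_on f S\<close>] assms(2) by (rule inj_on_subset)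
  moreover have "map_prod f f ` R \<subseteq> R" using f_pres by auto
  ultimately have "map_prod f f ` R = R" using \<open>finite R\<close> by (simp add: endo_inj_surj)
  then have "(x, y) \<in> map_prod f f ` R" using \<open>(x, y) \<in> R\<close> by simp
  then obtain a b where ab: "(a, b) \<in> R" "x = f a" "y = f b" by auto
  have "a \<in> S" "b \<in> S" "x \<in> S" "y \<in> S" using ab \<open>(x, y) \<in> R\<close> assms(2) by auto
  then have "g x = a" "g y = b" using g ab \<open>inj_on f S\<close> by (metis inj_onD)+
  then show ?thesis using ab by simp
qed

lemma card_saturated_subset:
  assumes "equiv A E" "finite A" "C \<subseteq> A" "E `` C \<subseteq> C"
    and "\<And>x. x \<in> C \<Longrightarrow> card (E `` {x}) = m"
  shows "card C = m * card ((\<lambda>x. E `` {x}) ` C)"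
proof -
  let ?classes = "(\<lambda>x. E `` {x}) ` C"
  have "\<Union> ?classes = C"
  proof
    show "C \<subseteq> \<Union> ?classes" using assms(3) equiv_class_self[OF assms(1)] by blast
    show "\<Union> ?classes \<subseteq> C" using assms(4) by blast
  qed
  moreover have "m * card ?classes = card (\<Union> ?classes)"
  proof (rule card_partition)
    show "finite ?classes" using assms(2,3) finite_subset by blast
    show "finite (\<Union> ?classes)" using \<open>\<Union> ?classes = C\<close> assms(2,3) finite_subset by auto
    show "\<And>Y. Y \<in> ?classes \<Longrightarrow> card Y = m" using assms(5) by blast
    show "Y \<inter> Z = {}" if YZ: "Y \<in> ?classes" "Z \<in> ?classes" "Y \<noteq> Z" for Y Z
    proof -
      obtain y z where "Y = E `` {y}" "Z = E `` {z}" using YZ(1,2) by blast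
      then show ?thesis using YZ(3) disjnt_equiv_class[OF assms(1)] equiv_class_eq[OF assms(1)]
        unfolding disjnt_def by metis
    qed
  qed
  ultimately show ?thesis by simp
qed

lemma card_quotient_full: "A \<noteq> {} \<Longrightarrow> card (A // (A \<times> A)) = 1"
proof -
  assume "A \<noteq> {}"
  then have "A // (A \<times> A) = {A}" unfolding quotient_def by auto
  then show ?thesis by simp
qed

lemma equiv_card_quotient_eq_1_iff:
  assumes "equiv A E" "A \<noteq> {}"
  shows "card (A // E) = 1 \<longleftrightarrow> E = A \<times> A"
proof
  assume "card (A // E) = 1"
  then obtain Y where Y: "A // E = {Y}" by (rule card_1_singletonE)
  have "(x, y) \<in> E" if "x \<in> A" "y \<in> A" for x y
  proof -
    have "E `` {x} = E `` {y}"
      using quotientI[where r = E, OF \<open>x \<in> A\<close>] quotientI[where r = E, OF \<open>y \<in> A\<close>] Y by simp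
    then show ?thesis using eq_equiv_class[OF _ assms(1) \<open>y \<in> A\<close>] by blast
  qed
  then show "E = A \<times> A" using equiv_type[OF assms(1)] by auto
qed (use assms(2) card_quotient_full in simp)

context
  fixes n :: nat and p :: "nat \<Rightarrow> nat"
  assumes primes: "\<forall>i\<in>{1..n}. Factorial_Ring.prime (p i)"
begin

lemma prime_index_dvd_if_dvd_prod:
  assumes "c dvd (\<Prod>i=1..n. p i)" "c \<noteq> 1"
  shows "\<exists>i\<in>{1..n}. p i dvd c"
proof -
  obtain q where q: "Factorial_Ring.prime q" "q dvd c" using prime_factor_nat \<open>c \<noteq> 1\<close> by blast
  then have "q dvd (\<Prod>i=1..n. p i)" using assms(1) dvd_trans by blast
  then obtain i where i: "i \<in> {1..n}" "q dvd p i"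
    using prime_dvd_prod_iff[of "{1..n}" q p] q(1) by auto
  then have "q = p i" using primes primes_dvd_imp_eq[of q "p i"] q(1) by blast
  then show ?thesis using i q by auto
qed

context
  assumes distinct: "inj_on p {1..n}"
begin

lemma prime_square_not_dvd_prod:
  assumes "i \<in> {1..n}"
  shows "\<not> p i * p i dvd (\<Prod>j=1..n. p j)"
proof
  assume "p i * p i dvd (\<Prod>j=1..n. p j)"
  moreover have "(\<Prod>j=1..n. p j) = p i * (\<Prod>j\<in>{1..n}-{i}. p j)"
    using assms by (simp add: prod.remove)
  moreover have "p i > 0" using primes assms prime_gt_0_nat by blast
  ultimately have "p i dvd (\<Prod>j\<in>{1..n}-{i}. p j)" by simp
  then have "\<exists>j\<in>{1..n}-{i}. p i dvd p j"
    using prime_dvd_prod_iff[of "{1..n}-{i}" "p i" p] primes assms by blast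
  then obtain j where j: "j \<in> {1..n}-{i}" "p i dvd p j" by blast
  then have "p i = p j" using primes assms primes_dvd_imp_eq[of "p i" "p j"] by auto
  then show False using inj_onD[OF distinct] assms j by blast
qed

lemma card_prime_indices_less:
  assumes "c dvd (\<Prod>i=1..n. p i)" "d dvd c" "d \<noteq> c"
  shows "card {i\<in>{1..n}. p i dvd d} < card {i\<in>{1..n}. p i dvd c}"
proof -
  obtain e where e: "c = d * e" using \<open>d dvd c\<close> by blast
  then have "e dvd (\<Prod>i=1..n. p i)" "e \<noteq> 1" using assms(1,3) dvd_trans by auto
  then obtain i where i: "i \<in> {1..n}" "p i dvd e" using prime_index_dvd_if_dvd_prod by blast
  have "\<not> p i dvd d"
  proof
    assume "p i dvd d"
    then have "p i * p i dvd (\<Prod>i=1..n. p i)"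
      using e i(2) assms(1) mult_dvd_mono dvd_trans by metis
    then show False using prime_square_not_dvd_prod i(1) by blast
  qed
  moreover have "p i dvd c" using e i by simp
  ultimately have "{i\<in>{1..n}. p i dvd d} \<subset> {i\<in>{1..n}. p i dvd c}"
    using i(1) \<open>d dvd c\<close> dvd_trans by blast
  then show ?thesis by (intro psubset_card_mono) auto
qed

lemma divisor_chain_of_prod_primes_reaches_1:
  fixes c :: "nat \<Rightarrow> nat"
  assumes dvd_prod: "\<And>k. c k dvd (\<Prod>i=1..n. p i)"
    and dvd_Suc: "\<And>k. c (Suc k) dvd c k"
    and strict: "\<And>k. c k \<noteq> 1 \<Longrightarrow> c (Suc k) \<noteq> c k"
  shows "c n = 1"
proof -
  have "c k = 1 \<or> card {i\<in>{1..n}. p i dvd c k} + k \<le> n" if "k \<le> n" for k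
    using that
  proof (induction k)
    case 0
    have "card {i\<in>{1..n}. p i dvd c 0} \<le> card {1..n}" by (intro card_mono) auto
    then show ?case by simp
  next
    case (Suc k)
    show ?case
    proof (cases "c k = 1")
      case True
      then show ?thesis using dvd_Suc[of k] by simp
    next
      case False
      then show ?thesis
        using Suc card_prime_indices_less[OF dvd_prod dvd_Suc strict[OF False]] by simp
    qed
  qed
  from this[of n] have "c n = 1 \<or> card {i\<in>{1..n}. p i dvd c n} = 0" by simp
  moreover have "card {i\<in>{1..n}. p i dvd c n} > 0" if "c n \<noteq> 1"
  proof -
    obtain i where "i \<in> {1..n}" "p i dvd c n"
      using prime_index_dvd_if_dvd_prod[OF dvd_prod \<open>c n \<noteq> 1\<close>] by blast
    then show ?thesis by (subst card_gt_0_iff) auto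
  qed
  ultimately show ?thesis by linarith
qed

end

end

section \<open>Products of generators in permutation groups\<close>

inductive_set monoid_generate :: "('a, 'b) monoid_scheme \<Rightarrow> 'a set \<Rightarrow> 'a set"
  for G and A where
    one: "\<one>\<^bsub>G\<^esub> \<in> monoid_generate G A"
  | mult_right: "c \<in> monoid_generate G A \<Longrightarrow> a \<in> A \<Longrightarrow> c \<otimes>\<^bsub>G\<^esub> a \<in> monoid_generate G A"

context monoid
begin

lemma monoid_generate_subset_carrier:
  "A \<subseteq> carrier G \<Longrightarrow> monoid_generate G A \<subseteq> carrier G"
proof
  show "c \<in> carrier G" if "A \<subseteq> carrier G" "c \<in> monoid_generate G A" for c
    using that(2) by induction (use that(1) in auto)
qed

lemma monoid_generate_incl: "a \<in> A \<Longrightarrow> A \<subseteq> carrier G \<Longrightarrow> a \<in> monoid_generate G A"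
  using monoid_generate.mult_right[OF monoid_generate.one] by (metis l_one subsetD)

lemma monoid_generate_mult_closed:
  assumes "A \<subseteq> carrier G" "c \<in> monoid_generate G A" "d \<in> monoid_generate G A"
  shows "c \<otimes> d \<in> monoid_generate G A"
  using assms(3)
proof induction
  case one
  have "c \<in> carrier G" using assms(1,2) monoid_generate_subset_carrier by blast
  then show ?case using assms(2) by simp
next
  case (mult_right d a)
  have "c \<in> carrier G" "d \<in> carrier G" "a \<in> carrier G"
    using assms mult_right monoid_generate_subset_carrier by blast+
  then have "c \<otimes> (d \<otimes> a) = (c \<otimes> d) \<otimes> a" by (simp add: m_assoc)
  then show ?case using mult_right monoid_generate.mult_right by metis
qed

lemma monoid_generate_pow_closed:
  "A \<subseteq> carrier G \<Longrightarrow> c \<in> monoid_generate G A \<Longrightarrow> c [^] (k::nat) \<in> monoid_generate G A"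
  by (induction k) (auto intro: monoid_generate.one monoid_generate_mult_closed)

end

text \<open>In a finite group inverses are positive powers, so no inverses of generators are needed.\<close>

lemma (in group) generate_eq_monoid_generate:
  assumes "finite (carrier G)" "A \<subseteq> carrier G"
  shows "generate G A = monoid_generate G A"
proof
  show "generate G A \<subseteq> monoid_generate G A"
  proof
    fix c assume "c \<in> generate G A"
    then show "c \<in> monoid_generate G A"
    proof induction
      case one
      show ?case by (rule monoid_generate.one)
    next
      case (incl a)
      show ?case using incl assms(2) by (rule monoid_generate_incl)
    next
      case (inv a)
      then have "inv a \<in> generate G {a}" by (simp add: generate.inv)
      then obtain k :: nat where "inv a = a [^] k"
        using generate_pow_on_finite_carrier[OF assms(1)] inv assms(2) by blast
      moreover have "a \<in> monoid_generate G A" using inv assms(2) by (rule monoid_generate_incl)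
      ultimately show ?case using monoid_generate_pow_closed[OF assms(2)] by simp
    next
      case (eng c d)
      then show ?case using assms(2) monoid_generate_mult_closed by blast
    qed
  qed
  show "monoid_generate G A \<subseteq> generate G A"
  proof
    fix c assume "c \<in> monoid_generate G A"
    then show "c \<in> generate G A"
      by induction (auto intro: generate.one generate.incl generate.eng)
  qed
qed

lemma BijGroup_mult_apply:
  "f \<in> carrier (BijGroup S) \<Longrightarrow> g \<in> carrier (BijGroup S) \<Longrightarrow> x \<in> S \<Longrightarrow>
    (f \<otimes>\<^bsub>BijGroup S\<^esub> g) x = f (g x)"
  by (simp add: BijGroup_def compose_def)

lemma BijGroup_one_apply: "x \<in> S \<Longrightarrow> \<one>\<^bsub>BijGroup S\<^esub> x = x"
  by (simp add: BijGroup_def)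

lemma BijGroup_apply_closed: "f \<in> carrier (BijGroup S) \<Longrightarrow> x \<in> S \<Longrightarrow> f x \<in> S"
  by (auto simp: BijGroup_def Bij_def bij_betw_def)

lemma BijGroup_inj_on: "f \<in> carrier (BijGroup S) \<Longrightarrow> inj_on f S"
  by (simp add: BijGroup_def Bij_def bij_betw_def)

lemma BijGroup_eqI:
  assumes "f \<in> carrier (BijGroup S)" "g \<in> carrier (BijGroup S)" "\<And>x. x \<in> S \<Longrightarrow> f x = g x"
  shows "f = g"
proof (rule extensionalityI[of f S g])
  show "f \<in> extensional S" "g \<in> extensional S"
    using assms(1,2) by (simp_all add: BijGroup_def Bij_imp_extensional)
qed (use assms(3) in auto)

lemma BijGroup_inv_apply:
  assumes "f \<in> carrier (BijGroup S)" "x \<in> S"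
  shows "(inv\<^bsub>BijGroup S\<^esub> f) (f x) = x" "f ((inv\<^bsub>BijGroup S\<^esub> f) x) = x"
proof -
  have "f \<in> Bij S" using assms(1) by (simp add: BijGroup_def)
  moreover from this have "bij_betw f S S" "f x \<in> S"
    using assms(2) by (auto simp: Bij_def bij_betwE)
  ultimately show "(inv\<^bsub>BijGroup S\<^esub> f) (f x) = x" "f ((inv\<^bsub>BijGroup S\<^esub> f) x) = x"
    using assms(2) by (simp_all add: inv_BijGroup bij_betw_inv_into_left bij_betw_inv_into_right)
qed

lemma finite_carrier_BijGroup: "finite S \<Longrightarrow> finite (carrier (BijGroup S))"
proof (rule finite_subset)
  show "carrier (BijGroup S) \<subseteq> S \<rightarrow>\<^sub>E S"
    by (auto simp: BijGroup_def Bij_def bij_betw_def PiE_def)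
qed (simp add: finite_PiE)

section \<open>Retraction relations\<close>

lemma multipermutation_and_mp_level_le:
  assumes "k \<ge> 1" "card (S // ret_rel S r k) = 1"
  shows "multipermutation S r \<and> mp_level S r \<le> k"
  using assms unfolding multipermutation_def mp_level_def by (auto intro: Least_le)

locale ybe_solution =
  fixes S :: "'a set" and r :: "'a \<times> 'a \<Rightarrow> 'a \<times> 'a"
  assumes solution: "solution S r"
begin

definition sig_inv :: "'a \<Rightarrow> 'a \<Rightarrow> 'a" where
  "sig_inv x = inv_into S (sig r x)"

lemma carrier_nonempty: "S \<noteq> {}"
  using solution by (simp add: solution_def)

lemma bij_betw_sig: "x \<in> S \<Longrightarrow> bij_betw (sig r x) S S"
  using solution by (simp add: solution_def)

lemma sig_closed: "x \<in> S \<Longrightarrow> y \<in> S \<Longrightarrow> sig r x y \<in> S"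
  using solution by (simp add: solution_def sig_def)

lemma sig_inv_closed: "x \<in> S \<Longrightarrow> y \<in> S \<Longrightarrow> sig_inv x y \<in> S"
  unfolding sig_inv_def by (metis bij_betw_sig bij_betw_inv_into bij_betwE)

lemma sig_inv_sig [simp]: "x \<in> S \<Longrightarrow> y \<in> S \<Longrightarrow> sig_inv x (sig r x y) = y"
  unfolding sig_inv_def by (metis bij_betw_sig bij_betw_inv_into_left)

lemma sig_sig_inv [simp]: "x \<in> S \<Longrightarrow> y \<in> S \<Longrightarrow> sig r x (sig_inv x y) = y"
  unfolding sig_inv_def by (metis bij_betw_sig bij_betw_inv_into_right)

lemma inj_on_sig_inv: "x \<in> S \<Longrightarrow> inj_on (sig_inv x) S"
  by (metis inj_onI sig_sig_inv)

lemma sig_sig_eq: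
  assumes "x \<in> S" "y \<in> S" "z \<in> S"
  shows "sig r x (sig r y z) = sig r (sig r x y) (sig r (gam r y x) z)"
proof -
  have "r12 r (r23 r (r12 r (x, y, z))) = r23 r (r12 r (r23 r (x, y, z)))"
    using solution assms unfolding solution_def by blast
  then have "fst (r12 r (r23 r (r12 r (x, y, z)))) = fst (r23 r (r12 r (r23 r (x, y, z))))"
    by simp
  then show ?thesis unfolding r12_def r23_def sig_def gam_def by (simp split: prod.splits)
qed

lemma gam_eq_sig_inv:
  assumes "x \<in> S" "y \<in> S"
  shows "gam r y x = sig_inv (sig r x y) x"
proof -
  have "r (r (x, y)) = (x, y)" "gam r y x \<in> S"
    using solution assms unfolding solution_def gam_def by auto
  then have "sig r (sig r x y) (gam r y x) = x" unfolding sig_def gam_def by simp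
  then show ?thesis using \<open>gam r y x \<in> S\<close> assms by (metis sig_closed sig_inv_sig)
qed

lemma sig_sig_inv_swap:
  assumes "a \<in> S" "b \<in> S" "u \<in> S"
  shows "sig r a (sig r (sig_inv a b) u) = sig r b (sig r (sig_inv b a) u)"
  using sig_sig_eq[OF \<open>a \<in> S\<close> sig_inv_closed \<open>u \<in> S\<close>] gam_eq_sig_inv[OF \<open>a \<in> S\<close> sig_inv_closed]
    assms by simp

lemma sig_inv_sig_inv_swap:
  assumes "w \<in> S" "x \<in> S" "t \<in> S"
  shows "sig_inv (sig_inv w x) (sig_inv w t) = sig_inv (sig_inv x w) (sig_inv x t)"
proof -
  define c d where "c = sig_inv w x" and "d = sig_inv x w"
  define u where "u = sig_inv c (sig_inv w t)"
  have "c \<in> S" "d \<in> S" "u \<in> S" using assms sig_inv_closed unfolding c_def d_def u_def by auto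
  have "sig r x (sig r d u) = t"
    using sig_sig_inv_swap[OF \<open>w \<in> S\<close> \<open>x \<in> S\<close> \<open>u \<in> S\<close>] assms sig_inv_closed
    unfolding c_def d_def u_def by simp
  then have "u = sig_inv d (sig_inv x t)"
    using \<open>d \<in> S\<close> \<open>u \<in> S\<close> assms by (metis sig_closed sig_inv_sig)
  then show ?thesis unfolding u_def c_def d_def .
qed

lemma ret_rel_subset: "ret_rel S r k \<subseteq> S \<times> S"
  by (cases k) auto

lemma ret_rel_refl: "x \<in> S \<Longrightarrow> (x, x) \<in> ret_rel S r k"
  by (induction k arbitrary: x) (auto simp: sig_closed)

lemma ret_rel_sym: "(x, y) \<in> ret_rel S r k \<Longrightarrow> (y, x) \<in> ret_rel S r k"
  by (induction k arbitrary: x y) auto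

lemma ret_rel_trans:
  "(x, y) \<in> ret_rel S r k \<Longrightarrow> (y, z) \<in> ret_rel S r k \<Longrightarrow> (x, z) \<in> ret_rel S r k"
proof (induction k arbitrary: x y z)
  case (Suc k)
  then have "\<forall>w\<in>S. (sig r x w, sig r z w) \<in> ret_rel S r k" by simp blast
  then show ?case using Suc.prems by simp
qed simp

lemma equiv_ret_rel: "equiv S (ret_rel S r k)"
proof (rule equivI)
  show "refl_on S (ret_rel S r k)"
    using ret_rel_subset ret_rel_refl by (auto simp: refl_on_def)
  show "sym (ret_rel S r k)" using ret_rel_sym by (auto intro: symI)
  show "trans (ret_rel S r k)" using ret_rel_trans by (auto intro: transI)
qed (rule ret_rel_subset)

lemma ret_rel_Suc_if_ret_rel: "(x, y) \<in> ret_rel S r k \<Longrightarrow> (x, y) \<in> ret_rel S r (Suc k)"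
  by (induction k arbitrary: x y) (auto simp: sig_closed ret_rel_refl)

lemma ret_rel_mono: "i \<le> j \<Longrightarrow> ret_rel S r i \<subseteq> ret_rel S r j"
  by (induction j rule: dec_induct) (use ret_rel_Suc_if_ret_rel in auto)

lemma ret_rel_stable:
  assumes "ret_rel S r (Suc k) = ret_rel S r k"
  shows "ret_rel S r (k + j) = ret_rel S r k"
proof (induction j)
  case (Suc j)
  have "ret_rel S r (Suc (k + j)) = ret_rel S r (Suc k)" by (simp only: ret_rel.simps Suc)
  then show ?case using assms by simp
qed simp

lemma ret_rel_Suc_neq_if_card_quotient_neq_1:
  assumes "multipermutation S r" "card (S // ret_rel S r k) \<noteq> 1"
  shows "ret_rel S r (Suc k) \<noteq> ret_rel S r k"
proof
  assume "ret_rel S r (Suc k) = ret_rel S r k"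
  obtain m where "card (S // ret_rel S r m) = 1"
    using assms(1) unfolding multipermutation_def by blast
  then have "ret_rel S r m = S \<times> S"
    using equiv_card_quotient_eq_1_iff[OF equiv_ret_rel carrier_nonempty] by blast
  then have "ret_rel S r (k + m) = S \<times> S"
    using ret_rel_mono[of m "k + m"] ret_rel_subset by auto
  then have "ret_rel S r k = S \<times> S"
    using ret_rel_stable[OF \<open>ret_rel S r (Suc k) = ret_rel S r k\<close>] by simp
  then show False
    using assms(2) equiv_card_quotient_eq_1_iff[OF equiv_ret_rel carrier_nonempty] by blast
qed

lemma ret_rel_Suc_sig_inv:
  assumes sig_inv_pres: "\<And>w x y. w \<in> S \<Longrightarrow> (x, y) \<in> ret_rel S r k \<Longrightarrow>
      (sig_inv w x, sig_inv w y) \<in> ret_rel S r k"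
    and "(x, y) \<in> ret_rel S r (Suc k)" "t \<in> S"
  shows "(sig_inv x t, sig_inv y t) \<in> ret_rel S r k"
proof -
  have "x \<in> S" "y \<in> S" using assms(2) by auto
  define z where "z = sig_inv y t"
  have "z \<in> S" unfolding z_def using \<open>y \<in> S\<close> \<open>t \<in> S\<close> by (rule sig_inv_closed)
  then have "(sig r x z, t) \<in> ret_rel S r k"
    using assms(2) \<open>y \<in> S\<close> \<open>t \<in> S\<close> unfolding z_def by auto
  then have "(z, sig_inv x t) \<in> ret_rel S r k"
    using sig_inv_pres[OF \<open>x \<in> S\<close>] \<open>x \<in> S\<close> \<open>z \<in> S\<close> by fastforce
  then show ?thesis unfolding z_def by (rule ret_rel_sym)
qed

lemma ret_rel_SucI_sig_inv:
  assumes sig_pres: "\<And>w x y. w \<in> S \<Longrightarrow> (x, y) \<in> ret_rel S r k \<Longrightarrow>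
      (sig r w x, sig r w y) \<in> ret_rel S r k"
    and "x \<in> S" "y \<in> S" and sig_inv_rel: "\<And>t. t \<in> S \<Longrightarrow> (sig_inv x t, sig_inv y t) \<in> ret_rel S r k"
  shows "(x, y) \<in> ret_rel S r (Suc k)"
proof -
  have "(sig r x z, sig r y z) \<in> ret_rel S r k" if "z \<in> S" for z
  proof -
    have "(sig_inv x (sig r y z), z) \<in> ret_rel S r k"
      using sig_inv_rel[of "sig r y z"] assms(2,3) that by (simp add: sig_closed)
    then have "(sig r y z, sig r x z) \<in> ret_rel S r k"
      using sig_pres[OF \<open>x \<in> S\<close>] assms(2,3) that by (fastforce simp: sig_closed)
    then show ?thesis by (rule ret_rel_sym)
  qed
  then show ?thesis using assms(2,3) by simp
qed

lemma sig_inv_preserves_ret_rel_Suc: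
  assumes sig_inv_pres: "\<And>w x y. w \<in> S \<Longrightarrow> (x, y) \<in> ret_rel S r k \<Longrightarrow>
      (sig_inv w x, sig_inv w y) \<in> ret_rel S r k"
    and sig_pres: "\<And>w x y. w \<in> S \<Longrightarrow> (x, y) \<in> ret_rel S r k \<Longrightarrow>
      (sig r w x, sig r w y) \<in> ret_rel S r k"
    and sig_inv_left: "\<And>a b t. (a, b) \<in> ret_rel S r k \<Longrightarrow> t \<in> S \<Longrightarrow>
      (sig_inv a t, sig_inv b t) \<in> ret_rel S r k"
    and "w \<in> S" and xy: "(x, y) \<in> ret_rel S r (Suc k)"
  shows "(sig_inv w x, sig_inv w y) \<in> ret_rel S r (Suc k)"
proof (rule ret_rel_SucI_sig_inv[OF sig_pres])
  have "x \<in> S" "y \<in> S" using xy by auto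
  then show "sig_inv w x \<in> S" "sig_inv w y \<in> S" using \<open>w \<in> S\<close> by (auto simp: sig_inv_closed)
  have sig_inv_cong: "(sig_inv a c, sig_inv b d) \<in> ret_rel S r k"
    if "(a, b) \<in> ret_rel S r k" "(c, d) \<in> ret_rel S r k" for a b c d
    using sig_inv_pres[of a c d] sig_inv_left[of a b d] that ret_rel_subset ret_rel_trans by blast
  fix t assume "t \<in> S"
  define s where "s = sig r w t"
  have "s \<in> S" "t = sig_inv w s" unfolding s_def using \<open>w \<in> S\<close> \<open>t \<in> S\<close> by (auto simp: sig_closed)
  text \<open>By \<open>sig_inv_sig_inv_swap\<close>, \<open>sig_inv (sig_inv w x) t\<close> is expressed through
    \<open>sig_inv x w\<close> and \<open>sig_inv x s\<close>, which depend on \<open>x\<close> only up to \<open>ret_rel S r k\<close>.\<close>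
  have "(sig_inv (sig_inv x w) (sig_inv x s), sig_inv (sig_inv y w) (sig_inv y s))
      \<in> ret_rel S r k"
    using sig_inv_cong ret_rel_Suc_sig_inv[OF sig_inv_pres xy] \<open>w \<in> S\<close> \<open>s \<in> S\<close> by blast
  then show "(sig_inv (sig_inv w x) t, sig_inv (sig_inv w y) t) \<in> ret_rel S r k"
    using sig_inv_sig_inv_swap \<open>x \<in> S\<close> \<open>y \<in> S\<close> \<open>w \<in> S\<close> \<open>s \<in> S\<close> \<open>t = sig_inv w s\<close> by simp
qed

lemma restrict_sig_in_BijGroup: "x \<in> S \<Longrightarrow> restrict (sig r x) S \<in> carrier (BijGroup S)"
  using bij_betw_sig[of x]
  by (simp add: BijGroup_def Bij_def bij_betw_cong[of S "restrict (sig r x) S" "sig r x"])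

lemma restrict_sig_in_permG: "x \<in> S \<Longrightarrow> restrict (sig r x) S \<in> permG S r"
  unfolding permG_def by (rule generate.incl) blast

end

sublocale ybe_solution \<subseteq> bij: group "BijGroup S"
  by (rule group_BijGroup)

sublocale ybe_solution \<subseteq> permG: subgroup "permG S r" "BijGroup S"
  unfolding permG_def
  by (rule group.generate_is_subgroup[OF group_BijGroup]) (auto simp: restrict_sig_in_BijGroup)

locale finite_ybe_solution = ybe_solution +
  assumes finite_carrier: "finite S"
begin

lemma ret_rel_sig_invariant:
  "(\<forall>w\<in>S. \<forall>(x, y)\<in>ret_rel S r k.
      (sig r w x, sig r w y) \<in> ret_rel S r k \<and> (sig_inv w x, sig_inv w y) \<in> ret_rel S r k) \<and>
   (\<forall>(a, b)\<in>ret_rel S r k. \<forall>t\<in>S. (sig_inv a t, sig_inv b t) \<in> ret_rel S r k)"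
proof (induction k)
  case 0
  show ?case by (auto simp: sig_closed sig_inv_closed)
next
  case (Suc k)
  then have sig_pres: "\<And>w x y. w \<in> S \<Longrightarrow> (x, y) \<in> ret_rel S r k \<Longrightarrow>
      (sig r w x, sig r w y) \<in> ret_rel S r k"
    and sig_inv_pres: "\<And>w x y. w \<in> S \<Longrightarrow> (x, y) \<in> ret_rel S r k \<Longrightarrow>
      (sig_inv w x, sig_inv w y) \<in> ret_rel S r k"
    and sig_inv_left: "\<And>a b t. (a, b) \<in> ret_rel S r k \<Longrightarrow> t \<in> S \<Longrightarrow>
      (sig_inv a t, sig_inv b t) \<in> ret_rel S r k"
    by blast+
  note sig_inv_pres_Suc = sig_inv_preserves_ret_rel_Suc[OF sig_inv_pres sig_pres sig_inv_left]
  text \<open>An injective self-map of the finite relation \<open>ret_rel S r (Suc k)\<close> is onto, so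
    \<open>sig r w\<close>, the inverse of \<open>sig_inv w\<close>, preserves it as well.\<close>
  have "(sig r w x, sig r w y) \<in> ret_rel S r (Suc k)"
    if "w \<in> S" "(x, y) \<in> ret_rel S r (Suc k)" for w x y
  proof (rule inverse_preserves_finite_relation[where f = "sig_inv w" and g = "sig r w"])
    show "finite (ret_rel S r (Suc k))"
      using finite_subset[OF ret_rel_subset] finite_carrier by blast
    show "inj_on (sig_inv w) S" using \<open>w \<in> S\<close> by (rule inj_on_sig_inv)
    show "(sig_inv w a, sig_inv w b) \<in> ret_rel S r (Suc k)"
      if "(a, b) \<in> ret_rel S r (Suc k)" for a b
      using sig_inv_pres_Suc \<open>w \<in> S\<close> that by blast
    show "sig r w a \<in> S \<and> sig_inv w (sig r w a) = a" if "a \<in> S" for a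
      using \<open>w \<in> S\<close> that by (simp add: sig_closed)
  qed (use that ret_rel_subset in auto)
  moreover have "(sig_inv a t, sig_inv b t) \<in> ret_rel S r (Suc k)"
    if "(a, b) \<in> ret_rel S r (Suc k)" "t \<in> S" for a b t
    using ret_rel_Suc_sig_inv[OF sig_inv_pres that] by (rule ret_rel_Suc_if_ret_rel)
  ultimately show ?case using sig_inv_pres_Suc by blast
qed

lemma ret_rel_sig:
  "w \<in> S \<Longrightarrow> (x, y) \<in> ret_rel S r k \<Longrightarrow> (sig r w x, sig r w y) \<in> ret_rel S r k"
  using ret_rel_sig_invariant by blast

lemma permG_eq_monoid_generate:
  "permG S r = monoid_generate (BijGroup S) {restrict (sig r x) S | x. x \<in> S}"
  unfolding permG_def using restrict_sig_in_BijGroup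
  by (intro group.generate_eq_monoid_generate group_BijGroup finite_carrier_BijGroup
      finite_carrier) blast

lemma permG_induct [consumes 1, case_names one mult_sig]:
  assumes "c \<in> permG S r"
    and "P \<one>\<^bsub>BijGroup S\<^esub>"
    and "\<And>c v. c \<in> permG S r \<Longrightarrow> P c \<Longrightarrow> v \<in> S \<Longrightarrow> P (c \<otimes>\<^bsub>BijGroup S\<^esub> restrict (sig r v) S)"
  shows "P c"
proof -
  have "c \<in> monoid_generate (BijGroup S) {restrict (sig r x) S | x. x \<in> S}"
    using assms(1) permG_eq_monoid_generate by simp
  then show "P c"
  proof induction
    case one
    show ?case by (rule assms(2))
  next
    case (mult_right c a)
    then obtain v where "v \<in> S" "a = restrict (sig r v) S" by blast
    then show ?case using assms(3) mult_right permG_eq_monoid_generate by simp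
  qed
qed

lemma permG_preserves_ret_rel:
  "g \<in> permG S r \<Longrightarrow> (x, y) \<in> ret_rel S r k \<Longrightarrow> (g x, g y) \<in> ret_rel S r k"
proof (induction g arbitrary: x y rule: permG_induct)
  case one
  have "x \<in> S" "y \<in> S" using one ret_rel_subset by auto
  then show ?case using one by (simp add: BijGroup_one_apply)
next
  case (mult_sig c v)
  have "x \<in> S" "y \<in> S" using mult_sig.prems ret_rel_subset by auto
  have "(sig r v x, sig r v y) \<in> ret_rel S r k"
    using \<open>v \<in> S\<close> mult_sig.prems by (rule ret_rel_sig)
  then have "(c (sig r v x), c (sig r v y)) \<in> ret_rel S r k" by (rule mult_sig.IH)
  then show ?case
    using BijGroup_mult_apply[OF permG.mem_carrier[OF \<open>c \<in> permG S r\<close>]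
        restrict_sig_in_BijGroup[OF \<open>v \<in> S\<close>]] \<open>x \<in> S\<close> \<open>y \<in> S\<close>
    by simp
qed

lemma finite_ret_class: "finite (ret_rel S r k `` {x})"
  by (rule finite_subset[OF _ finite_carrier]) (use ret_rel_subset in blast)

lemma card_ret_class_pos:
  assumes "x \<in> S"
  shows "card (ret_rel S r k `` {x}) > 0"
proof -
  have "x \<in> ret_rel S r k `` {x}" using ret_rel_refl[OF assms] by simp
  then show ?thesis using finite_ret_class card_gt_0_iff by blast
qed

lemma card_quotient_ret_rel_pos: "card (S // ret_rel S r k) > 0"
  using carrier_nonempty finite_carrier ret_rel_subset
  by (simp add: card_gt_0_iff finite_quotient)

end

section \<open>Counting retraction classes\<close>

locale indecomposable_solution = finite_ybe_solution +
  assumes indecomposable: "indecomposable S r"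
begin

lemma card_ret_class_le:
  assumes "g \<in> permG S r" "x \<in> S"
  shows "card (ret_rel S r k `` {x}) \<le> card (ret_rel S r k `` {g x})"
proof (rule card_inj_on_le)
  show "inj_on g (ret_rel S r k `` {x})"
    by (rule inj_on_subset[OF BijGroup_inj_on[OF permG.mem_carrier[OF assms(1)]]])
      (use ret_rel_subset in blast)
  show "g ` (ret_rel S r k `` {x}) \<subseteq> ret_rel S r k `` {g x}"
    using permG_preserves_ret_rel[OF assms(1)] by blast
qed (rule finite_ret_class)

lemma card_ret_class_eq:
  assumes "x \<in> S" "y \<in> S"
  shows "card (ret_rel S r k `` {x}) = card (ret_rel S r k `` {y})"
proof -
  obtain g h where "g \<in> permG S r" "g x = y" "h \<in> permG S r" "h y = x"
    using indecomposable assms unfolding indecomposable_def by metis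
  then show ?thesis using card_ret_class_le assms by (metis le_antisym)
qed

lemma card_eq_card_ret_class_mult:
  assumes "x \<in> S"
  shows "card S = card (ret_rel S r k `` {x}) * card (S // ret_rel S r k)"
proof -
  have "card S = card (ret_rel S r k `` {x}) * card ((\<lambda>y. ret_rel S r k `` {y}) ` S)"
  proof (rule card_saturated_subset[OF equiv_ret_rel finite_carrier order_refl])
    show "ret_rel S r k `` S \<subseteq> S" using ret_rel_subset by blast
  qed (rule card_ret_class_eq[OF _ assms])
  moreover have "S // ret_rel S r k = (\<lambda>y. ret_rel S r k `` {y}) ` S"
    unfolding quotient_def by blast
  ultimately show ?thesis by simp
qed

lemma card_ret_class_dvd_Suc:
  assumes "x \<in> S"
  shows "card (ret_rel S r k `` {x}) dvd card (ret_rel S r (Suc k) `` {x})"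
proof -
  let ?C = "ret_rel S r (Suc k) `` {x}"
  have "card ?C = card (ret_rel S r k `` {x}) * card ((\<lambda>y. ret_rel S r k `` {y}) ` ?C)"
  proof (rule card_saturated_subset[OF equiv_ret_rel finite_carrier])
    show "?C \<subseteq> S" using ret_rel_subset by blast
    show "ret_rel S r k `` ?C \<subseteq> ?C"
      using ret_rel_Suc_if_ret_rel ret_rel_trans by blast
    show "card (ret_rel S r k `` {y}) = card (ret_rel S r k `` {x})" if "y \<in> ?C" for y
      using that ret_rel_subset card_ret_class_eq assms by blast
  qed
  then show ?thesis by simp
qed

lemma card_quotient_ret_rel_Suc_dvd:
  "card (S // ret_rel S r (Suc k)) dvd card (S // ret_rel S r k)"
proof -
  obtain x where "x \<in> S" using carrier_nonempty by blast
  obtain j where j: "card (ret_rel S r (Suc k) `` {x}) = card (ret_rel S r k `` {x}) * j"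
    using card_ret_class_dvd_Suc[OF \<open>x \<in> S\<close>] by blast
  have "card (ret_rel S r k `` {x}) * card (S // ret_rel S r k)
      = card (ret_rel S r k `` {x}) * (j * card (S // ret_rel S r (Suc k)))"
    using card_eq_card_ret_class_mult[OF \<open>x \<in> S\<close>, of k]
      card_eq_card_ret_class_mult[OF \<open>x \<in> S\<close>, of "Suc k"] j by (metis mult.assoc)
  then have "card (S // ret_rel S r k) = j * card (S // ret_rel S r (Suc k))"
    using card_ret_class_pos[OF \<open>x \<in> S\<close>, of k] by (simp del: ret_rel.simps)
  then show ?thesis by simp
qed

lemma ret_rel_Suc_eq_if_card_quotient_eq:
  assumes "card (S // ret_rel S r (Suc k)) = card (S // ret_rel S r k)"
  shows "ret_rel S r (Suc k) = ret_rel S r k"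
proof -
  have "ret_rel S r (Suc k) `` {x} = ret_rel S r k `` {x}" if "x \<in> S" for x
  proof (rule sym, rule card_subset_eq)
    show "finite (ret_rel S r (Suc k) `` {x})" by (rule finite_ret_class)
    show "ret_rel S r k `` {x} \<subseteq> ret_rel S r (Suc k) `` {x}"
      using ret_rel_Suc_if_ret_rel by blast
    show "card (ret_rel S r k `` {x}) = card (ret_rel S r (Suc k) `` {x})"
      using card_eq_card_ret_class_mult[OF that, of k]
        card_eq_card_ret_class_mult[OF that, of "Suc k"] assms card_quotient_ret_rel_pos[of k]
      by simp
  qed
  then show ?thesis using ret_rel_subset by blast
qed

lemma card_quotient_ret_rel_eq_1:
  fixes n :: nat and p :: "nat \<Rightarrow> nat"
  assumes "multipermutation S r"
    and "\<forall>i\<in>{1..n}. Factorial_Ring.prime (p i)" "inj_on p {1..n}"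
    and "card S = (\<Prod>i=1..n. p i)"
  shows "card (S // ret_rel S r n) = 1"
proof (rule divisor_chain_of_prod_primes_reaches_1[OF assms(2,3)])
  obtain x where "x \<in> S" using carrier_nonempty by blast
  show "card (S // ret_rel S r k) dvd (\<Prod>i=1..n. p i)" for k
    using card_eq_card_ret_class_mult[OF \<open>x \<in> S\<close>, of k] assms(4) by simp
  show "card (S // ret_rel S r (Suc k)) dvd card (S // ret_rel S r k)" for k
    by (rule card_quotient_ret_rel_Suc_dvd)
  show "card (S // ret_rel S r (Suc k)) \<noteq> card (S // ret_rel S r k)"
    if "card (S // ret_rel S r k) \<noteq> 1" for k
    using ret_rel_Suc_neq_if_card_quotient_neq_1[OF assms(1) that]
      ret_rel_Suc_eq_if_card_quotient_eq by blast
qed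

end

section \<open>The brace structure on the permutation group\<close>

context finite_ybe_solution
begin

definition pointwise_ret_rel :: "nat \<Rightarrow> (('a \<Rightarrow> 'a) \<times> ('a \<Rightarrow> 'a)) set" where
  "pointwise_ret_rel k = {(g, h). g \<in> permG S r \<and> h \<in> permG S r \<and>
     (\<forall>y\<in>S. (g y, h y) \<in> ret_rel S r k)}"

lemma pointwise_ret_rel_inv:
  assumes "(g, h) \<in> pointwise_ret_rel k"
  shows "(inv\<^bsub>BijGroup S\<^esub> g, inv\<^bsub>BijGroup S\<^esub> h) \<in> pointwise_ret_rel k"
proof -
  have g: "g \<in> permG S r" and h: "h \<in> permG S r"
    and gh: "\<And>y. y \<in> S \<Longrightarrow> (g y, h y) \<in> ret_rel S r k"
    using assms unfolding pointwise_ret_rel_def by auto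
  let ?g' = "inv\<^bsub>BijGroup S\<^esub> g" and ?h' = "inv\<^bsub>BijGroup S\<^esub> h"
  have "(?g' y, ?h' y) \<in> ret_rel S r k" if "y \<in> S" for y
  proof -
    define u where "u = ?h' y"
    have "u \<in> S"
      unfolding u_def using permG.mem_carrier[OF permG.m_inv_closed[OF h]] that
      by (rule BijGroup_apply_closed)
    have "h u = y" unfolding u_def using permG.mem_carrier[OF h] that by (rule BijGroup_inv_apply)
    have "(?g' (g u), ?g' (h u)) \<in> ret_rel S r k"
      using permG.m_inv_closed[OF g] gh[OF \<open>u \<in> S\<close>] by (rule permG_preserves_ret_rel)
    then have "(u, ?g' y) \<in> ret_rel S r k"
      using BijGroup_inv_apply(1)[OF permG.mem_carrier[OF g] \<open>u \<in> S\<close>] \<open>h u = y\<close> by simp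
    then show ?thesis unfolding u_def by (rule ret_rel_sym)
  qed
  then show ?thesis unfolding pointwise_ret_rel_def using g h permG.m_inv_closed by blast
qed

end

locale induced_brace = finite_ybe_solution +
  fixes pl :: "('a \<Rightarrow> 'a) \<Rightarrow> ('a \<Rightarrow> 'a) \<Rightarrow> 'a \<Rightarrow> 'a"
  assumes induced_brace_add: "induced_brace_add S r pl"
begin

abbreviation brace_plus (infixl "\<boxplus>" 65) where
  "a \<boxplus> b \<equiv> a \<otimes>\<^bsub>addG (permG S r) pl\<^esub> b"

abbreviation brace_uminus ("\<boxminus> _" [81] 80) where
  "\<boxminus> a \<equiv> inv\<^bsub>addG (permG S r) pl\<^esub> a"

abbreviation lam :: "('a \<Rightarrow> 'a) \<Rightarrow> ('a \<Rightarrow> 'a) \<Rightarrow> 'a \<Rightarrow> 'a" where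
  "lam \<equiv> blam (permG S r) pl (monoid.mult (BijGroup S))"

abbreviation brace_solution :: "('a \<Rightarrow> 'a) \<times> ('a \<Rightarrow> 'a) \<Rightarrow> ('a \<Rightarrow> 'a) \<times> ('a \<Rightarrow> 'a)" where
  "brace_solution \<equiv> brace_sol (permG S r) pl (monoid.mult (BijGroup S))"

lemma left_brace: "left_brace (permG S r) pl (monoid.mult (BijGroup S))"
  using induced_brace_add by (simp add: induced_brace_add_def)

sublocale additive: comm_group "addG (permG S r) pl"
  rewrites "carrier (addG (permG S r) pl) = permG S r"
proof -
  show "comm_group (addG (permG S r) pl)" using left_brace by (simp add: left_brace_def)
qed (simp add: addG_def)

lemma brace_distrib:
  "a \<in> permG S r \<Longrightarrow> b \<in> permG S r \<Longrightarrow> c \<in> permG S r \<Longrightarrow>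
    (a \<otimes>\<^bsub>BijGroup S\<^esub> (b \<boxplus> c)) \<boxplus> a = (a \<otimes>\<^bsub>BijGroup S\<^esub> b) \<boxplus> (a \<otimes>\<^bsub>BijGroup S\<^esub> c)"
  using left_brace by (simp add: left_brace_def addG_def)

lemma lam_eq: "lam g c = \<boxminus> g \<boxplus> (g \<otimes>\<^bsub>BijGroup S\<^esub> c)"
  by (simp add: blam_def addG_def)

lemma lam_restrict_sig:
  "g \<in> permG S r \<Longrightarrow> y \<in> S \<Longrightarrow> lam g (restrict (sig r y) S) = restrict (sig r (g y)) S"
  using induced_brace_add by (simp add: induced_brace_add_def)

lemma brace_zero_eq_one: "\<one>\<^bsub>addG (permG S r) pl\<^esub> = \<one>\<^bsub>BijGroup S\<^esub>"
proof -
  let ?z = "\<one>\<^bsub>addG (permG S r) pl\<^esub>"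
  have z: "?z \<in> permG S r" by (rule additive.one_closed)
  have "?z \<otimes>\<^bsub>BijGroup S\<^esub> ?z \<in> permG S r" using z z by (rule permG.m_closed)
  moreover have "(?z \<otimes>\<^bsub>BijGroup S\<^esub> ?z) \<boxplus> ?z = (?z \<otimes>\<^bsub>BijGroup S\<^esub> ?z) \<boxplus> (?z \<otimes>\<^bsub>BijGroup S\<^esub> ?z)"
    using brace_distrib[OF z z z] z by simp
  ultimately have "?z = ?z \<otimes>\<^bsub>BijGroup S\<^esub> ?z" using z by (metis additive.l_cancel)
  then show ?thesis
    using group.l_cancel_one'[OF group_BijGroup] permG.mem_carrier[OF z] by metis
qed

text \<open>In any left brace \<open>g h = g + \<lambda>\<^sub>g(h)\<close>; here \<open>\<lambda>\<^sub>g(\<sigma>\<^sub>y) = \<sigma>\<^bsub>g(y)\<^esub>\<close>.\<close>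

lemma comp_sig_eq_plus:
  assumes "g \<in> permG S r" "y \<in> S"
  shows "g \<otimes>\<^bsub>BijGroup S\<^esub> restrict (sig r y) S = g \<boxplus> restrict (sig r (g y)) S"
proof -
  have gy: "g \<otimes>\<^bsub>BijGroup S\<^esub> restrict (sig r y) S \<in> permG S r"
    using assms restrict_sig_in_permG permG.m_closed by blast
  have "g \<boxplus> restrict (sig r (g y)) S = g \<boxplus> (\<boxminus> g \<boxplus> (g \<otimes>\<^bsub>BijGroup S\<^esub> restrict (sig r y) S))"
    using lam_restrict_sig[OF assms] unfolding lam_eq by simp
  also have "\<dots> = g \<otimes>\<^bsub>BijGroup S\<^esub> restrict (sig r y) S"
    using assms(1) gy by (simp add: additive.m_assoc[symmetric])
  finally show ?thesis by simp
qed

lemma lam_plus: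
  assumes "g \<in> permG S r" "a \<in> permG S r" "b \<in> permG S r"
  shows "lam g (a \<boxplus> b) = lam g a \<boxplus> lam g b"
proof -
  define x y z where "x = g \<otimes>\<^bsub>BijGroup S\<^esub> a" and "y = g \<otimes>\<^bsub>BijGroup S\<^esub> b"
    and "z = g \<otimes>\<^bsub>BijGroup S\<^esub> (a \<boxplus> b)"
  have closed: "x \<in> permG S r" "y \<in> permG S r" "z \<in> permG S r"
    using assms permG.m_closed unfolding x_def y_def z_def by simp_all
  have "lam g a \<boxplus> lam g b = \<boxminus> g \<boxplus> (\<boxminus> g \<boxplus> (x \<boxplus> y))"
    unfolding lam_eq x_def[symmetric] y_def[symmetric] using assms(1) closed
    by (simp add: additive.m_ac)
  also have "\<dots> = \<boxminus> g \<boxplus> (\<boxminus> g \<boxplus> (z \<boxplus> g))"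
    using brace_distrib[OF assms] unfolding x_def y_def z_def by simp
  also have "\<dots> = \<boxminus> g \<boxplus> z"
    using assms(1) closed by (simp add: additive.m_lcomm[of "\<boxminus> g" z g])
  finally show ?thesis unfolding lam_eq z_def by simp
qed

lemma lam_one:
  assumes "g \<in> permG S r"
  shows "lam g \<one>\<^bsub>BijGroup S\<^esub> = \<one>\<^bsub>BijGroup S\<^esub>"
proof -
  have "g \<otimes>\<^bsub>BijGroup S\<^esub> \<one>\<^bsub>BijGroup S\<^esub> = g" using permG.mem_carrier[OF assms] by simp
  then show ?thesis unfolding lam_eq using assms by (simp add: brace_zero_eq_one)
qed

lemma pointwise_ret_rel_plus_sig:
  assumes gh: "(g, h) \<in> pointwise_ret_rel k" and "(w, w') \<in> ret_rel S r (Suc k)"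
  shows "(g \<boxplus> restrict (sig r w) S, h \<boxplus> restrict (sig r w') S) \<in> pointwise_ret_rel k"
proof -
  have g: "g \<in> permG S r" and h: "h \<in> permG S r"
    and gh_rel: "\<And>y. y \<in> S \<Longrightarrow> (g y, h y) \<in> ret_rel S r k"
    using gh unfolding pointwise_ret_rel_def by auto
  have "w \<in> S" "w' \<in> S" using assms(2) by auto
  define a b where "a = (inv\<^bsub>BijGroup S\<^esub> g) w" and "b = (inv\<^bsub>BijGroup S\<^esub> h) w'"
  have "a \<in> S" "b \<in> S" "g a = w" "h b = w'"
    unfolding a_def b_def using \<open>w \<in> S\<close> \<open>w' \<in> S\<close> g h
    by (auto simp: BijGroup_apply_closed BijGroup_inv_apply permG.mem_carrier)
  have sums: "g \<boxplus> restrict (sig r w) S = g \<otimes>\<^bsub>BijGroup S\<^esub> restrict (sig r a) S"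
    "h \<boxplus> restrict (sig r w') S = h \<otimes>\<^bsub>BijGroup S\<^esub> restrict (sig r b) S"
    using comp_sig_eq_plus g h \<open>a \<in> S\<close> \<open>b \<in> S\<close> \<open>g a = w\<close> \<open>h b = w'\<close> by simp_all
  have "(a, (inv\<^bsub>BijGroup S\<^esub> h) w) \<in> ret_rel S r k"
    using pointwise_ret_rel_inv[OF gh] \<open>w \<in> S\<close> unfolding a_def pointwise_ret_rel_def by blast
  moreover have "((inv\<^bsub>BijGroup S\<^esub> h) w, b) \<in> ret_rel S r (Suc k)"
    unfolding b_def using permG.m_inv_closed[OF h] assms(2) by (rule permG_preserves_ret_rel)
  ultimately have ab: "(a, b) \<in> ret_rel S r (Suc k)"
    using ret_rel_Suc_if_ret_rel ret_rel_trans by blast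
  have "(g (sig r a y), h (sig r b y)) \<in> ret_rel S r k" if "y \<in> S" for y
  proof -
    have "(g (sig r a y), g (sig r b y)) \<in> ret_rel S r k"
      using ab that permG_preserves_ret_rel[OF g] by simp
    moreover have "(g (sig r b y), h (sig r b y)) \<in> ret_rel S r k"
      using gh_rel sig_closed \<open>b \<in> S\<close> that by blast
    ultimately show ?thesis by (rule ret_rel_trans)
  qed
  then show ?thesis
    unfolding sums pointwise_ret_rel_def
    using g h \<open>a \<in> S\<close> \<open>b \<in> S\<close> restrict_sig_in_permG permG.m_closed
    by (auto simp: BijGroup_mult_apply permG.mem_carrier restrict_sig_in_BijGroup)
qed

lemma pointwise_ret_rel_lam:
  assumes gh: "(g, h) \<in> pointwise_ret_rel (Suc k)" and "c \<in> permG S r"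
  shows "(lam g c, lam h c) \<in> pointwise_ret_rel k"
proof -
  have g: "g \<in> permG S r" and h: "h \<in> permG S r"
    and gh_rel: "\<And>y. y \<in> S \<Longrightarrow> (g y, h y) \<in> ret_rel S r (Suc k)"
    using gh unfolding pointwise_ret_rel_def by auto
  show ?thesis
    using \<open>c \<in> permG S r\<close>
  proof (induction c rule: permG_induct)
    case one
    have "(\<one>\<^bsub>BijGroup S\<^esub>, \<one>\<^bsub>BijGroup S\<^esub>) \<in> pointwise_ret_rel k"
      unfolding pointwise_ret_rel_def using permG.one_closed
      by (simp add: BijGroup_one_apply ret_rel_refl)
    then show ?case using g h by (simp add: lam_one)
  next
    case (mult_sig c v)
    have "c v \<in> S"
      using permG.mem_carrier[OF \<open>c \<in> permG S r\<close>] \<open>v \<in> S\<close> by (rule BijGroup_apply_closed)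
    have lam_step: "lam f (c \<otimes>\<^bsub>BijGroup S\<^esub> restrict (sig r v) S)
        = lam f c \<boxplus> restrict (sig r (f (c v))) S" if "f \<in> permG S r" for f
    proof -
      have "lam f (c \<otimes>\<^bsub>BijGroup S\<^esub> restrict (sig r v) S)
          = lam f (c \<boxplus> restrict (sig r (c v)) S)"
        using comp_sig_eq_plus[OF \<open>c \<in> permG S r\<close> \<open>v \<in> S\<close>] by simp
      also have "\<dots> = lam f c \<boxplus> lam f (restrict (sig r (c v)) S)"
        using that \<open>c \<in> permG S r\<close> restrict_sig_in_permG[OF \<open>c v \<in> S\<close>] by (rule lam_plus)
      also have "\<dots> = lam f c \<boxplus> restrict (sig r (f (c v))) S"
        using lam_restrict_sig[OF that \<open>c v \<in> S\<close>] by simp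
      finally show ?thesis .
    qed
    show ?case
      unfolding lam_step[OF g] lam_step[OF h]
      using mult_sig.IH gh_rel[OF \<open>c v \<in> S\<close>] by (rule pointwise_ret_rel_plus_sig)
  qed
qed

lemma sig_brace_solution: "sig brace_solution g c = lam g c"
  by (simp add: sig_def brace_sol_def)

lemma pointwise_ret_rel_subset_brace_ret_rel:
  "pointwise_ret_rel k \<subseteq> ret_rel (permG S r) brace_solution k"
proof (induction k)
  case 0
  show ?case
  proof clarify
    fix g h assume "(g, h) \<in> pointwise_ret_rel 0"
    then have "g \<in> permG S r" "h \<in> permG S r" "\<forall>y\<in>S. g y = h y"
      unfolding pointwise_ret_rel_def by auto
    moreover from this have "g = h" by (intro BijGroup_eqI[where S = S] permG.mem_carrier) auto
    ultimately show "(g, h) \<in> ret_rel (permG S r) brace_solution 0" by simp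
  qed
next
  case (Suc k)
  show ?case
  proof clarify
    fix g h assume gh: "(g, h) \<in> pointwise_ret_rel (Suc k)"
    then have "g \<in> permG S r" "h \<in> permG S r" unfolding pointwise_ret_rel_def by auto
    moreover have "(sig brace_solution g c, sig brace_solution h c)
        \<in> ret_rel (permG S r) brace_solution k" if "c \<in> permG S r" for c
      using pointwise_ret_rel_lam[OF gh that] Suc.IH by (auto simp: sig_brace_solution)
    ultimately show "(g, h) \<in> ret_rel (permG S r) brace_solution (Suc k)" by simp
  qed
qed

lemma card_quotient_brace_ret_rel_eq_1:
  assumes "ret_rel S r k = S \<times> S"
  shows "card (permG S r // ret_rel (permG S r) brace_solution k) = 1"
proof -
  have "(g, h) \<in> pointwise_ret_rel k" if "g \<in> permG S r" "h \<in> permG S r" for g h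
    unfolding pointwise_ret_rel_def
    using that assms BijGroup_apply_closed[OF permG.mem_carrier] by auto
  then have "permG S r \<times> permG S r \<subseteq> ret_rel (permG S r) brace_solution k"
    using pointwise_ret_rel_subset_brace_ret_rel by blast
  moreover have "ret_rel (permG S r) brace_solution k \<subseteq> permG S r \<times> permG S r"
    by (cases k) auto
  ultimately have "ret_rel (permG S r) brace_solution k = permG S r \<times> permG S r" by blast
  moreover have "permG S r \<noteq> {}" using permG.one_closed by blast
  ultimately show ?thesis using card_quotient_full by simp
qed

end

theorem corollary4p2:
  fixes S :: "'a set" and r :: "'a \<times> 'a \<Rightarrow> 'a \<times> 'a"
    and n :: nat and p :: "nat \<Rightarrow> nat"
  assumes "n \<ge> 1"
    and "\<forall>i\<in>{1..n}. Factorial_Ring.prime (p i)"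
    and "inj_on p {1..n}"
    and "solution S r"
    and "indecomposable S r"
    and "multipermutation S r"
    and "card S = (\<Prod>i=1..n. p i)"
  shows "mp_level S r \<le> n \<and>
    (\<forall>pl. induced_brace_add S r pl \<longrightarrow>
       multipermutation (permG S r) (brace_sol (permG S r) pl (monoid.mult (BijGroup S))) \<and>
       mp_level (permG S r) (brace_sol (permG S r) pl (monoid.mult (BijGroup S))) \<le> n)"
proof -
  have "finite S"
    using assms(2,7) by (metis card.infinite prime_gt_0_nat prod_pos less_irrefl)
  with assms(4,5) interpret indecomposable_solution S r
    by unfold_locales
  have classes: "card (S // ret_rel S r n) = 1"
    using assms(6,2,3,7) by (rule card_quotient_ret_rel_eq_1)
  then have full: "ret_rel S r n = S \<times> S"
    using equiv_card_quotient_eq_1_iff[OF equiv_ret_rel carrier_nonempty] by blast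
  have "mp_level S r \<le> n"
    using multipermutation_and_mp_level_le[OF assms(1) classes] ..
  moreover have
    "multipermutation (permG S r) (brace_sol (permG S r) pl (monoid.mult (BijGroup S))) \<and>
     mp_level (permG S r) (brace_sol (permG S r) pl (monoid.mult (BijGroup S))) \<le> n"
    if "induced_brace_add S r pl" for pl
  proof -
    interpret induced_brace S r pl using that by unfold_locales
    show ?thesis
      using assms(1) card_quotient_brace_ret_rel_eq_1[OF full]
      by (rule multipermutation_and_mp_level_le)
  qed
  ultimately show ?thesis by blast
qed

end
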